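(* In the setting of the context, fix $k$ and assume that the MHDM iterate $x_k$ minimizes $x\mapsto\frac{\lambda_k}{2}\|Tx-f\|^2+J(x)$. Let $u_{k+1}=x_{k+1}-x_k$ and $\xi_{k+1}=\lambda_{k+1}T^*(f-Tx_{k+1})\in\partial J(u_{k+1})$. Then $x_{k+1}$ minimizes $x\mapsto\frac{\lambda_{k+1}}{2}\|Tx-f\|^2+J(x)$ if and only if $$J(u_{k+1})-J(x_{k+1})-\langle\xi_{k+1},u_{k+1}-x_{k+1}\rangle=0 .$$
   Context: $X$ Banach, $H$ Hilbert, $T\in\mathcal L(X,H)$, $f\in H$, $J:X\to[0,\infty]$ a seminorm ($J(\alpha x)=|\alpha|J(x)$, $J(x+y)\le J(x)+J(y)$) such that the relevant Tikhonov-type functionals have minimizers, $(\lambda_k)$ an increasing sequence of positive parameters. MHDM: $x_0\in\arg\min_x\frac{\lambda_0}{2}\|Tx-f\|^2+J(x)$, and for $k\ge1$, $x_k\in\arg\min_x\frac{\lambda_k}{2}\|Tx-f\|^2+J(x-x_{k-1})$. Subgradient $\partial J(x_0)=\{x^*\in X^*:\langle x^*,x-x_0\rangle\le J(x)-J(x_0)\ \forall x\}$. *)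

theory Defs
  imports "HOL-Analysis.Analysis"
begin

definition ext_seminorm :: "('x::real_vector \<Rightarrow> ereal) \<Rightarrow> bool" where
  "ext_seminorm J \<longleftrightarrow> (\<forall>x. 0 \<le> J x) \<and>
     (\<forall>a x. J (a *\<^sub>R x) = ereal \<bar>a\<bar> * J x) \<and>
     (\<forall>x y. J (x + y) \<le> J x + J y)"

definition tikh :: "('x \<Rightarrow> 'h::real_normed_vector) \<Rightarrow> 'h \<Rightarrow> real \<Rightarrow> ('x \<Rightarrow> ereal) \<Rightarrow> 'x \<Rightarrow> ereal" where
  "tikh T f lam J x = ereal (lam / 2 * (norm (T x - f))\<^sup>2) + J x"

definition is_minimizer :: "('x \<Rightarrow> ereal) \<Rightarrow> 'x \<Rightarrow> bool" where
  "is_minimizer F x \<longleftrightarrow> (\<forall>y. F x \<le> F y)"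

end

(*
  For a seminorm J, z minimizes lam/2 ||T z - f||^2 + J z exactly when
  \<xi> = lam T*(f - T z) satisfies <\<xi>, v> \<le> J v for all v and <\<xi>, z> = J z;
  one direction perturbs z along v and along -z, the other completes the square.
  The MHDM step makes u = x (k+1) - x k a minimizer of the functional with parameter
  lam (k+1). For y = x (k+1) and \<xi>' = lam (k+1) T*(f - T y), the subgradient at u bounds
  the gap D = J u - J y - <\<xi>', u - y> above by -lam (k+1) ||T u - T y||^2, while D \<ge> 0
  whenever \<xi>' is a subgradient at y. So minimality of y forces D = 0; conversely D = 0
  forces T u = T y, hence \<xi>' is the subgradient at u, and D = 0 carries the optimality
  conditions over from u to y.
*)

theory Submission
  imports Defs
begin

lemma ext_seminorm_nonneg: "ext_seminorm J \<Longrightarrow> 0 \<le> J x"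
  unfolding ext_seminorm_def by blast

lemma ext_seminorm_scaleR: "ext_seminorm J \<Longrightarrow> J (a *\<^sub>R x) = ereal \<bar>a\<bar> * J x"
  unfolding ext_seminorm_def by blast

lemma ext_seminorm_triangle: "ext_seminorm J \<Longrightarrow> J (x + y) \<le> J x + J y"
  unfolding ext_seminorm_def by blast

lemma ext_seminorm_zero:
  assumes "ext_seminorm J"
  shows "J 0 = 0"
  using ext_seminorm_scaleR[OF assms, of 0 0] by (cases "J 0") simp_all

lemma is_minimizer_translate:
  fixes a :: "'a::ab_group_add"
  assumes "is_minimizer (\<lambda>z. F (z - a)) y"
  shows "is_minimizer F (y - a)"
  unfolding is_minimizer_def
proof
  fix z
  show "F (y - a) \<le> F z"
    using assms[unfolded is_minimizer_def, rule_format, of "z + a"] by simp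
qed

lemma nonneg_if_quadratic_nonneg_near_zero:
  fixes a b :: real
  assumes "\<And>t. 0 < t \<Longrightarrow> t < 1 \<Longrightarrow> 0 \<le> t * a + t\<^sup>2 * b"
  shows "0 \<le> a"
proof (rule tendsto_lowerbound)
  show "((\<lambda>t. a + t * b) \<longlongrightarrow> a) (at_right 0)"
    by (auto intro!: tendsto_eq_intros)
  have "0 \<le> a + t * b" if "0 < t" "t < 1" for t
  proof -
    have "0 \<le> t * (a + t * b)"
      using assms[OF that] by (simp add: power2_eq_square algebra_simps)
    then show ?thesis
      using \<open>0 < t\<close> by (simp add: zero_le_mult_iff)
  qed
  then show "\<forall>\<^sub>F t in at_right 0. 0 \<le> a + t * b"
    unfolding eventually_at_right_field by (intro exI[of _ 1]) auto
qed simp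

(* For a seminorm J and a linear functional \<xi> this is \<xi> \<in> \<partial>J(z): by positive homogeneity,
   \<xi>(y - z) \<le> J y - J z for all y splits into the two conditions below. *)
definition seminorm_subgrad :: "('x \<Rightarrow> ereal) \<Rightarrow> 'x \<Rightarrow> ('x \<Rightarrow> real) \<Rightarrow> bool" where
  "seminorm_subgrad J z \<xi> \<longleftrightarrow> (\<forall>v. ereal (\<xi> v) \<le> J v) \<and> J z = ereal (\<xi> z)"

lemma seminorm_subgrad_gap_nonneg:
  assumes "linear \<xi>" and "seminorm_subgrad J y \<xi>"
  shows "0 \<le> J u - J y - ereal (\<xi> (u - y))"
proof -
  have "ereal (\<xi> u) \<le> J u" and "J y = ereal (\<xi> y)"
    using assms(2) unfolding seminorm_subgrad_def by auto
  then show ?thesis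
    using linear_diff[OF assms(1)] by (cases "J u") auto
qed

lemma seminorm_subgrad_gap_le:
  assumes "linear \<xi>" and "seminorm_subgrad J u \<xi>"
  shows "J u - J y - ereal (\<eta> (u - y)) \<le> ereal (\<xi> (u - y) - \<eta> (u - y))"
proof -
  have "ereal (\<xi> y) \<le> J y" and "J u = ereal (\<xi> u)"
    using assms(2) unfolding seminorm_subgrad_def by auto
  then show ?thesis
    using linear_diff[OF assms(1)] by (cases "J y") auto
qed

lemma seminorm_subgrad_transfer:
  assumes "linear \<xi>" and "seminorm_subgrad J u \<xi>"
    and "J u - J y - ereal (\<xi> (u - y)) = 0"
  shows "seminorm_subgrad J y \<xi>"
proof -
  have "\<forall>v. ereal (\<xi> v) \<le> J v" and "J u = ereal (\<xi> u)"
    using assms(2) unfolding seminorm_subgrad_def by auto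
  then show ?thesis
    using assms(3) linear_diff[OF assms(1)] unfolding seminorm_subgrad_def
    by (cases "J y") auto
qed

lemma linear_scaled_inner_comp:
  assumes "bounded_linear T"
  shows "linear (\<lambda>v. c * inner w (T v))"
proof -
  have "bounded_linear (\<lambda>v. inner w (T v))"
    by (rule bounded_linear_compose[OF bounded_linear_inner_right assms])
  then have "bounded_linear (\<lambda>v. c * inner w (T v))"
    by (rule bounded_linear_compose[OF bounded_linear_mult_right])
  then show ?thesis
    by (rule bounded_linear.linear)
qed

lemma tikh_minimizer_finite:
  assumes "ext_seminorm J" and "is_minimizer (tikh T f lam J) z"
  shows "J z \<noteq> \<infinity>"
proof
  assume "J z = \<infinity>"
  moreover have "tikh T f lam J z \<le> tikh T f lam J 0"
    using assms(2) unfolding is_minimizer_def by blast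
  ultimately show False
    using ext_seminorm_zero[OF assms(1)] by (simp add: tikh_def)
qed

lemma tikh_minimizer_variational_ineq:
  fixes T :: "'x::real_normed_vector \<Rightarrow> 'h::real_inner"
  assumes T: "bounded_linear T" and min: "is_minimizer (tikh T f lam J) z"
    and Jz: "J z = ereal j"
    and perturb: "\<And>t. 0 < t \<Longrightarrow> t < 1 \<Longrightarrow> J (z + t *\<^sub>R v) \<le> ereal (j + t * c)"
  shows "lam * inner (f - T z) (T v) \<le> c"
proof -
  interpret T: bounded_linear T by (rule T)
  define r where "r = T z - f"
  define w where "w = T v"
  have "0 \<le> lam * inner r w + c"
  proof (rule nonneg_if_quadratic_nonneg_near_zero)
    fix t :: real
    assume t: "0 < t" "t < 1"
    have "tikh T f lam J z \<le> tikh T f lam J (z + t *\<^sub>R v)"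
      using min unfolding is_minimizer_def by blast
    also have "\<dots> = ereal (lam / 2 * (norm (r + t *\<^sub>R w))\<^sup>2) + J (z + t *\<^sub>R v)"
      unfolding tikh_def r_def w_def
      by (simp add: T.add T.scaleR algebra_simps)
    also have "\<dots> \<le> ereal (lam / 2 * (norm (r + t *\<^sub>R w))\<^sup>2) + ereal (j + t * c)"
      by (rule add_left_mono[OF perturb[OF t]])
    finally have "lam / 2 * (norm r)\<^sup>2 \<le> lam / 2 * (norm (r + t *\<^sub>R w))\<^sup>2 + t * c"
      by (simp add: tikh_def Jz r_def)
    moreover have "(norm (r + t *\<^sub>R w))\<^sup>2 = (norm r)\<^sup>2 + 2 * t * inner r w + t\<^sup>2 * (norm w)\<^sup>2"
      unfolding power2_norm_eq_inner
      by (simp add: inner_add_left inner_add_right inner_commute power2_eq_square algebra_simps)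
    ultimately show "0 \<le> t * (lam * inner r w + c) + t\<^sup>2 * (lam / 2 * (norm w)\<^sup>2)"
      by (simp add: algebra_simps)
  qed
  then show ?thesis
    by (simp add: r_def w_def inner_diff_left algebra_simps)
qed

lemma tikh_minimizer_subgrad:
  fixes T :: "'x::real_normed_vector \<Rightarrow> 'h::real_inner"
  assumes T: "bounded_linear T" and J: "ext_seminorm J"
    and min: "is_minimizer (tikh T f lam J) z"
  shows "seminorm_subgrad J z (\<lambda>v. lam * inner (f - T z) (T v))"
proof -
  obtain j where Jz: "J z = ereal j"
    using tikh_minimizer_finite[OF J min] ext_seminorm_nonneg[OF J, of z] by (cases "J z") auto
  have bound: "ereal (lam * inner (f - T z) (T v)) \<le> J v" for v
  proof (cases "J v")
    case (real c)
    have "J (z + t *\<^sub>R v) \<le> ereal (j + t * c)" if "0 < t" for t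
      using ext_seminorm_triangle[OF J, of z "t *\<^sub>R v"] ext_seminorm_scaleR[OF J, of t v] that
      by (simp add: Jz real)
    then show ?thesis
      using tikh_minimizer_variational_ineq[OF T min Jz, of v c] real by simp
  qed (use ext_seminorm_nonneg[OF J, of v] in simp_all)
  \<comment> \<open>Shrinking z towards 0 gives the reverse inequality at v = z\<close>
  have "J (z + t *\<^sub>R (- z)) \<le> ereal (j + t * (- j))" if "0 < t" "t < 1" for t
    using ext_seminorm_scaleR[OF J, of "1 - t" z] that
    by (simp add: Jz scaleR_diff_left algebra_simps)
  then have "lam * inner (f - T z) (T (- z)) \<le> - j"
    by (rule tikh_minimizer_variational_ineq[OF T min Jz])
  then have "J z \<le> ereal (lam * inner (f - T z) (T z))"
    by (simp add: Jz linear_simps T)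
  with bound show ?thesis
    unfolding seminorm_subgrad_def by (auto intro: order.antisym)
qed

lemma tikh_minimizer_if_subgrad:
  fixes T :: "'x::real_normed_vector \<Rightarrow> 'h::real_inner"
  assumes T: "bounded_linear T" and lam: "0 \<le> lam"
    and subgrad: "seminorm_subgrad J z (\<lambda>v. lam * inner (f - T z) (T v))"
  shows "is_minimizer (tikh T f lam J) z"
  unfolding is_minimizer_def
proof
  fix y
  define a b where "a = T z" and "b = T y"
  have data: "lam / 2 * (norm (a - f))\<^sup>2 + lam * inner (f - a) a
      = lam / 2 * (norm (b - f))\<^sup>2 + lam * inner (f - a) b - lam / 2 * (norm (b - a))\<^sup>2"
    unfolding power2_norm_eq_inner
    by (simp add: inner_diff_left inner_diff_right inner_commute algebra_simps)
  have "tikh T f lam J z = ereal (lam / 2 * (norm (a - f))\<^sup>2 + lam * inner (f - a) a)"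
    using subgrad unfolding seminorm_subgrad_def tikh_def a_def by simp
  also have "\<dots> \<le> ereal (lam / 2 * (norm (b - f))\<^sup>2 + lam * inner (f - a) b)"
    unfolding data using lam by simp
  also have "\<dots> = ereal (lam / 2 * (norm (b - f))\<^sup>2) + ereal (lam * inner (f - a) b)"
    by simp
  also have "\<dots> \<le> ereal (lam / 2 * (norm (b - f))\<^sup>2) + J y"
    using subgrad unfolding seminorm_subgrad_def a_def b_def by (intro add_left_mono) blast
  also have "\<dots> = tikh T f lam J y"
    unfolding tikh_def b_def ..
  finally show "tikh T f lam J z \<le> tikh T f lam J y" .
qed

lemma tikh_minimizer_iff_subgrad:
  fixes T :: "'x::real_normed_vector \<Rightarrow> 'h::real_inner"
  assumes "bounded_linear T" and "ext_seminorm J" and "0 \<le> lam"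
  shows "is_minimizer (tikh T f lam J) z \<longleftrightarrow> seminorm_subgrad J z (\<lambda>v. lam * inner (f - T z) (T v))"
  using tikh_minimizer_subgrad tikh_minimizer_if_subgrad assms by blast

lemma tikh_subgrad_gap_le:
  fixes T :: "'x::real_normed_vector \<Rightarrow> 'h::real_inner"
  assumes T: "bounded_linear T"
    and subgrad: "seminorm_subgrad J u (\<lambda>v. lam * inner (f - T u) (T v))"
  shows "J u - J y - ereal (lam * inner (f - T y) (T (u - y)))
    \<le> ereal (- lam * (norm (T u - T y))\<^sup>2)"
proof -
  interpret T: bounded_linear T by (rule T)
  have "lam * inner (f - T u) (T (u - y)) - lam * inner (f - T y) (T (u - y))
      = - lam * (norm (T u - T y))\<^sup>2"
    unfolding power2_norm_eq_inner T.diff by (simp add: inner_diff_left algebra_simps)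
  then show ?thesis
    using seminorm_subgrad_gap_le[OF linear_scaled_inner_comp[OF T] subgrad, of y
        "\<lambda>v. lam * inner (f - T y) (T v)"]
    by simp
qed

theorem mainTheorem11:
  fixes T :: "'x::banach \<Rightarrow> 'h::{real_inner, complete_space}"
    and f :: 'h and J :: "'x \<Rightarrow> ereal" and lam :: "nat \<Rightarrow> real"
    and x :: "nat \<Rightarrow> 'x" and k :: nat
  assumes T: "bounded_linear T"
    and J: "ext_seminorm J"
    and lam_pos: "\<forall>n. 0 < lam n"
    and lam_inc: "incseq lam"
    and mhdm0: "is_minimizer (tikh T f (lam 0) J) (x 0)"
    and mhdm: "\<forall>n. is_minimizer (\<lambda>z. tikh T f (lam (Suc n)) J (z - x n)) (x (Suc n))"
    and xk: "is_minimizer (tikh T f (lam k) J) (x k)"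
  shows "is_minimizer (tikh T f (lam (Suc k)) J) (x (Suc k)) \<longleftrightarrow>
    J (x (Suc k) - x k) - J (x (Suc k))
      - ereal (lam (Suc k) * inner (f - T (x (Suc k))) (T ((x (Suc k) - x k) - x (Suc k)))) = 0"
proof -
  define L u y where "L = lam (Suc k)" and "u = x (Suc k) - x k" and "y = x (Suc k)"
  define gap where "gap = J u - J y - ereal (L * inner (f - T y) (T (u - y)))"
  have L: "0 < L"
    using lam_pos by (simp add: L_def)
  note minimizer_iff = tikh_minimizer_iff_subgrad[OF T J less_imp_le[OF L]]
  have "is_minimizer (tikh T f L J) u"
    using is_minimizer_translate[where F = "tikh T f (lam (Suc k)) J", OF mhdm[rule_format, of k]]
    by (simp add: L_def u_def)
  then have subgrad_u: "seminorm_subgrad J u (\<lambda>v. L * inner (f - T u) (T v))"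
    using minimizer_iff by blast
  have gap_le: "gap \<le> ereal (- L * (norm (T u - T y))\<^sup>2)"
    unfolding gap_def by (rule tikh_subgrad_gap_le[OF T subgrad_u])
  have "is_minimizer (tikh T f L J) y \<longleftrightarrow> gap = 0"
  proof
    assume "is_minimizer (tikh T f L J) y"
    then have "0 \<le> gap"
      unfolding gap_def minimizer_iff
      by (rule seminorm_subgrad_gap_nonneg[OF linear_scaled_inner_comp[OF T]])
    moreover have "gap \<le> 0"
      using gap_le L by (simp add: order_trans[OF gap_le])
    ultimately show "gap = 0"
      by simp
  next
    assume "gap = 0"
    with gap_le L have "T u = T y"
      by (simp add: mult_le_0_iff)
    with subgrad_u have "seminorm_subgrad J u (\<lambda>v. L * inner (f - T y) (T v))"
      by simp
    then have "seminorm_subgrad J y (\<lambda>v. L * inner (f - T y) (T v))"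
      using seminorm_subgrad_transfer[OF linear_scaled_inner_comp[OF T]] \<open>gap = 0\<close>
      unfolding gap_def by blast
    then show "is_minimizer (tikh T f L J) y"
      using minimizer_iff by blast
  qed
  then show ?thesis
    unfolding gap_def L_def u_def y_def .
qed

end
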